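(* Let $(A,\gamma)$ be a quasiordered set and let $\{\alpha_i\mid i\in I\}$ be a half-space realizer of $\gamma$ with $|I|\ge2$. Then there exists a family $(R_i)_{i\in I}$, indexed by the same set $I$, of linear extensions of the induced partial order $r_\gamma$ on $A/(\gamma\cap\gamma^{-1})$ such that $\bigcap_{i\in I}R_i=r_\gamma$.
   Context: A quasiorder on $A$ is a reflexive and transitive relation; $\Delta_A=\{(a,a)\mid a\in A\}$. A quasiorder $\alpha$ on $A$ is a half-space if there is a quasiorder $\beta$ on $A$ with $\alpha\cup\beta=A\times A$ and $\alpha\cap\beta=\Delta_A$. A half-space realizer of a quasiorder $\gamma$ on $A$ is a set $\{\alpha_i\mid i\in I\}$ of half-spaces on $A$ with $\bigcap_{i\in I}\alpha_i=\gamma$. For a quasiorder $\gamma$, $r_\gamma$ is the induced partial order on $A/(\gamma\cap\gamma^{-1})$: $([a],[b])\in r_\gamma$ iff $(a,b)\in\gamma$. *)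

theory Defs
  imports Main
begin

definition quasiorder_on :: "'a set \<Rightarrow> 'a rel \<Rightarrow> bool" where
  "quasiorder_on A r \<longleftrightarrow> r \<subseteq> A \<times> A \<and> (\<forall>a\<in>A. (a, a) \<in> r) \<and> trans r"

definition half_space :: "'a set \<Rightarrow> 'a rel \<Rightarrow> bool" where
  "half_space A \<alpha> \<longleftrightarrow> quasiorder_on A \<alpha> \<and>
     (\<exists>\<beta>. quasiorder_on A \<beta> \<and> \<alpha> \<union> \<beta> = A \<times> A \<and> \<alpha> \<inter> \<beta> = Id_on A)"

definition half_space_realizer :: "'a set \<Rightarrow> 'a rel \<Rightarrow> 'i set \<Rightarrow> ('i \<Rightarrow> 'a rel) \<Rightarrow> bool" where
  "half_space_realizer A \<gamma> I \<alpha> \<longleftrightarrow> (\<forall>i\<in>I. half_space A (\<alpha> i)) \<and> (\<Inter>i\<in>I. \<alpha> i) = \<gamma>"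

definition induced_order :: "'a set \<Rightarrow> 'a rel \<Rightarrow> 'a set rel" where
  "induced_order A \<gamma> = {(X, Y). X \<in> A // (\<gamma> \<inter> \<gamma>\<inverse>) \<and> Y \<in> A // (\<gamma> \<inter> \<gamma>\<inverse>) \<and>
      (\<exists>a\<in>X. \<exists>b\<in>Y. (a, b) \<in> \<gamma>)}"

definition linear_order_on' :: "'b set \<Rightarrow> 'b rel \<Rightarrow> bool" where
  "linear_order_on' B R \<longleftrightarrow> R \<subseteq> B \<times> B \<and> (\<forall>x\<in>B. (x, x) \<in> R) \<and> trans R \<and> antisym R \<and>
     (\<forall>x\<in>B. \<forall>y\<in>B. (x, y) \<in> R \<or> (y, x) \<in> R)"

definition linear_extension :: "'b set \<Rightarrow> 'b rel \<Rightarrow> 'b rel \<Rightarrow> bool" where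
  "linear_extension B r R \<longleftrightarrow> linear_order_on' B R \<and> r \<subseteq> R"

end

theory Submission
  imports Defs
begin

(* A linear extension of the induced order is the same thing as a total preorder P on A with
   gamma <= P and P inter P^-1 <= gamma, so it suffices to find such total preorders P_i whose
   intersection is gamma.  The complement of a half-space alpha is transitive off the diagonal,
   hence declaring alpha-incomparable elements equivalent turns alpha into a total preorder, and
   each of its tie classes is either an alpha-equivalence class or an alpha-antichain.  Breaking
   these ties lexicographically (on equivalence classes by an order containing gamma, on
   antichains by any order) gives a total preorder P_i extending gamma that excludes every pair
   strictly reversed by alpha_i.  The tie-breakers are assembled from a linear extension U of
   gamma (Szpilrajn), its reverse and two fixed members alpha_i1, alpha_i2 of the realizer, so
   that a pair left incomparable by alpha_j is excluded by P_j, P_i1 or P_i2. *)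

section \<open>Szpilrajn's extension theorem\<close>

lemma trans_antisym_extend_incomparable:
  assumes "trans M" "antisym M" "(y, x) \<notin> M"
  defines "M' \<equiv> M \<union> {(u, v). (u, x) \<in> M \<and> (y, v) \<in> M}"
  shows "trans M'" "antisym M'"
proof -
  have M_trans: "(a, c) \<in> M" if "(a, b) \<in> M" "(b, c) \<in> M" for a b c
    using assms(1) that by (rule transD)
  have no_cycle: False if "(y, u) \<in> M" "(u, x) \<in> M" for u
    using M_trans[OF that] assms(3) by blast
  show "trans M'"
  proof (rule transI)
    fix u v w assume "(u, v) \<in> M'" "(v, w) \<in> M'"
    then consider "(u, v) \<in> M" "(v, w) \<in> M" | "(u, v) \<in> M" "(v, x) \<in> M" "(y, w) \<in> M"
      | "(u, x) \<in> M" "(y, v) \<in> M" "(v, w) \<in> M" | "(y, v) \<in> M" "(v, x) \<in> M"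
      unfolding M'_def by blast
    then show "(u, w) \<in> M'"
      unfolding M'_def by cases (blast intro: M_trans dest: no_cycle)+
  qed
  show "antisym M'"
  proof (rule antisymI)
    fix u v assume "(u, v) \<in> M'" "(v, u) \<in> M'"
    then consider "(u, v) \<in> M" "(v, u) \<in> M" | "(y, u) \<in> M" "(u, v) \<in> M" "(v, x) \<in> M"
      | "(y, v) \<in> M" "(v, u) \<in> M" "(u, x) \<in> M" | "(y, u) \<in> M" "(u, x) \<in> M"
      unfolding M'_def by blast
    then show "u = v"
      by cases (blast intro: antisymD[OF assms(2)] M_trans dest: no_cycle)+
  qed
qed

lemma szpilrajn_extension:
  assumes "r \<subseteq> B \<times> B" "\<forall>x\<in>B. (x, x) \<in> r" "trans r" "antisym r"
  shows "\<exists>R. linear_order_on' B R \<and> r \<subseteq> R"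
proof -
  let ?S = "{R. r \<subseteq> R \<and> R \<subseteq> B \<times> B \<and> trans R \<and> antisym R}"
  have "\<exists>M\<in>?S. \<forall>X\<in>?S. M \<subseteq> X \<longrightarrow> X = M"
  proof (rule subset_Zorn_nonempty)
    have "r \<in> ?S"
      using assms by simp
    then show "?S \<noteq> {}"
      by blast
  next
    fix C assume "C \<noteq> {}" "subset.chain ?S C"
    then have C: "C \<subseteq> ?S" "chain\<^sub>\<subseteq> C"
      by (auto simp: subset_chain_def chain_subset_def)
    have "trans (\<Union>C)" "antisym (\<Union>C)"
      using C by (auto intro: chain_subset_trans_Union chain_subset_antisym_Union)
    moreover have "r \<subseteq> \<Union>C" "\<Union>C \<subseteq> B \<times> B"
      using C(1) \<open>C \<noteq> {}\<close> by auto
    ultimately show "\<Union>C \<in> ?S"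
      by simp
  qed
  then obtain M where "M \<in> ?S" and maximal: "\<forall>X\<in>?S. M \<subseteq> X \<longrightarrow> X = M"
    by (rule bexE)
  then have M: "r \<subseteq> M" "M \<subseteq> B \<times> B" "trans M" "antisym M"
    by simp_all
  have "(x, y) \<in> M \<or> (y, x) \<in> M" if "x \<in> B" "y \<in> B" for x y
  proof (rule ccontr)
    assume incomparable: "\<not> ((x, y) \<in> M \<or> (y, x) \<in> M)"
    define M' where "M' = M \<union> {(u, v). (u, x) \<in> M \<and> (y, v) \<in> M}"
    have "trans M'" "antisym M'"
      using trans_antisym_extend_incomparable[OF M(3,4)] incomparable unfolding M'_def by auto
    moreover have "r \<subseteq> M'" "M' \<subseteq> B \<times> B"
      using M(1,2) unfolding M'_def by auto
    ultimately have "M' = M"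
      using maximal unfolding M'_def by simp
    moreover have "(x, y) \<in> M'"
      using that assms(2) M(1) unfolding M'_def by blast
    ultimately show False
      using incomparable by simp
  qed
  then show ?thesis
    using M assms(2) unfolding linear_order_on'_def by blast
qed

section \<open>Total preorders and the quotient of a quasiorder\<close>

definition total_preorder_on :: "'a set \<Rightarrow> 'a rel \<Rightarrow> bool" where
  "total_preorder_on A R \<longleftrightarrow> R \<subseteq> A \<times> A \<and> trans R \<and> (\<forall>a\<in>A. \<forall>b\<in>A. (a, b) \<in> R \<or> (b, a) \<in> R)"

lemma total_preorder_on_refl: "total_preorder_on A R \<Longrightarrow> a \<in> A \<Longrightarrow> (a, a) \<in> R"
  unfolding total_preorder_on_def by blast

lemma total_preorder_on_converse: "total_preorder_on A R \<Longrightarrow> total_preorder_on A (R\<inverse>)"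
  unfolding total_preorder_on_def trans_def by blast

lemma equiv_Int_converse: "quasiorder_on A \<gamma> \<Longrightarrow> equiv A (\<gamma> \<inter> \<gamma>\<inverse>)"
  unfolding quasiorder_on_def equiv_def refl_on_def sym_def trans_def by blast

lemma Int_converse_class_eq_iff:
  assumes "quasiorder_on A \<gamma>" "a \<in> A" "b \<in> A"
  shows "(\<gamma> \<inter> \<gamma>\<inverse>) `` {a} = (\<gamma> \<inter> \<gamma>\<inverse>) `` {b} \<longleftrightarrow> (a, b) \<in> \<gamma> \<and> (b, a) \<in> \<gamma>"
  using eq_equiv_class_iff[OF equiv_Int_converse[OF assms(1)] assms(2,3)] by auto

definition quotient_rel :: "'a rel \<Rightarrow> 'a rel \<Rightarrow> 'a set rel" where
  "quotient_rel \<gamma> P = {((\<gamma> \<inter> \<gamma>\<inverse>) `` {a}, (\<gamma> \<inter> \<gamma>\<inverse>) `` {b}) | a b. (a, b) \<in> P}"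

lemma quotient_rel_iff:
  assumes \<gamma>: "quasiorder_on A \<gamma>" and P: "P \<subseteq> A \<times> A" "trans P" "\<gamma> \<subseteq> P" and "a \<in> A" "b \<in> A"
  shows "((\<gamma> \<inter> \<gamma>\<inverse>) `` {a}, (\<gamma> \<inter> \<gamma>\<inverse>) `` {b}) \<in> quotient_rel \<gamma> P \<longleftrightarrow> (a, b) \<in> P"
proof
  assume "((\<gamma> \<inter> \<gamma>\<inverse>) `` {a}, (\<gamma> \<inter> \<gamma>\<inverse>) `` {b}) \<in> quotient_rel \<gamma> P"
  then obtain a' b' where "(a', b') \<in> P"
    and "(\<gamma> \<inter> \<gamma>\<inverse>) `` {a} = (\<gamma> \<inter> \<gamma>\<inverse>) `` {a'}" "(\<gamma> \<inter> \<gamma>\<inverse>) `` {b} = (\<gamma> \<inter> \<gamma>\<inverse>) `` {b'}"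
    unfolding quotient_rel_def by blast
  moreover have "a' \<in> A" "b' \<in> A"
    using \<open>(a', b') \<in> P\<close> P(1) by auto
  ultimately have "(a, a') \<in> P" "(a', b') \<in> P" "(b', b) \<in> P"
    using Int_converse_class_eq_iff[OF \<gamma>] \<open>a \<in> A\<close> \<open>b \<in> A\<close> P(3) by auto
  then show "(a, b) \<in> P"
    using P(2) by (blast dest: transD)
qed (auto simp: quotient_rel_def)

lemma induced_order_eq_quotient_rel:
  assumes "quasiorder_on A \<gamma>"
  shows "induced_order A \<gamma> = quotient_rel \<gamma> \<gamma>"
proof -
  have "X = (\<gamma> \<inter> \<gamma>\<inverse>) `` {a}" if "X \<in> A // (\<gamma> \<inter> \<gamma>\<inverse>)" "a \<in> X" for X a
    using that equiv_Int_converse[OF assms] by (metis Image_singleton_iff equiv_class_eq quotientE)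
  moreover have "a \<in> (\<gamma> \<inter> \<gamma>\<inverse>) `` {a}" if "a \<in> A" for a
    using that assms unfolding quasiorder_on_def by blast
  ultimately show ?thesis
    using assms unfolding induced_order_def quotient_rel_def quasiorder_on_def
    by (auto intro: quotientI) blast
qed

lemma partial_order_quotient_rel:
  assumes \<gamma>: "quasiorder_on A \<gamma>" and P: "P \<subseteq> A \<times> A" "trans P" "\<gamma> \<subseteq> P" "P \<inter> P\<inverse> \<subseteq> \<gamma>"
  defines "R \<equiv> quotient_rel \<gamma> P"
  shows "R \<subseteq> A // (\<gamma> \<inter> \<gamma>\<inverse>) \<times> A // (\<gamma> \<inter> \<gamma>\<inverse>)" "\<forall>X \<in> A // (\<gamma> \<inter> \<gamma>\<inverse>). (X, X) \<in> R"
    "trans R" "antisym R"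
proof -
  note R_iff = quotient_rel_iff[OF \<gamma> P(1-3), folded R_def]
  have R_elem: "\<exists>a b. a \<in> A \<and> b \<in> A \<and> X = (\<gamma> \<inter> \<gamma>\<inverse>) `` {a} \<and> Y = (\<gamma> \<inter> \<gamma>\<inverse>) `` {b}"
    if "(X, Y) \<in> R" for X Y
    using that P(1) unfolding R_def quotient_rel_def by blast
  show "R \<subseteq> A // (\<gamma> \<inter> \<gamma>\<inverse>) \<times> A // (\<gamma> \<inter> \<gamma>\<inverse>)"
    using P(1) unfolding R_def quotient_rel_def by (auto intro: quotientI)
  show "\<forall>X \<in> A // (\<gamma> \<inter> \<gamma>\<inverse>). (X, X) \<in> R"
    using \<gamma> P(3) unfolding R_def quotient_rel_def quotient_def quasiorder_on_def by blast
  show "trans R"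
  proof (rule transI)
    fix X Y Z assume "(X, Y) \<in> R" "(Y, Z) \<in> R"
    with R_elem obtain a b c where "a \<in> A" "b \<in> A" "c \<in> A"
      and "X = (\<gamma> \<inter> \<gamma>\<inverse>) `` {a}" "Y = (\<gamma> \<inter> \<gamma>\<inverse>) `` {b}" "Z = (\<gamma> \<inter> \<gamma>\<inverse>) `` {c}"
      by metis
    with \<open>(X, Y) \<in> R\<close> \<open>(Y, Z) \<in> R\<close> R_iff P(2) show "(X, Z) \<in> R"
      by (metis transD)
  qed
  show "antisym R"
  proof (rule antisymI)
    fix X Y assume "(X, Y) \<in> R" "(Y, X) \<in> R"
    with R_elem obtain a b where "a \<in> A" "b \<in> A"
      and ab: "X = (\<gamma> \<inter> \<gamma>\<inverse>) `` {a}" "Y = (\<gamma> \<inter> \<gamma>\<inverse>) `` {b}"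
      by metis
    with \<open>(X, Y) \<in> R\<close> \<open>(Y, X) \<in> R\<close> R_iff P(4) have "(a, b) \<in> \<gamma>" "(b, a) \<in> \<gamma>"
      by auto
    then show "X = Y"
      using ab Int_converse_class_eq_iff[OF \<gamma> \<open>a \<in> A\<close> \<open>b \<in> A\<close>] by simp
  qed
qed

lemma linear_extension_quotient_rel:
  assumes \<gamma>: "quasiorder_on A \<gamma>" and P: "total_preorder_on A P" "\<gamma> \<subseteq> P" "P \<inter> P\<inverse> \<subseteq> \<gamma>"
  shows "linear_extension (A // (\<gamma> \<inter> \<gamma>\<inverse>)) (induced_order A \<gamma>) (quotient_rel \<gamma> P)"
proof -
  have P_on: "P \<subseteq> A \<times> A" "trans P" and P_total: "\<forall>a\<in>A. \<forall>b\<in>A. (a, b) \<in> P \<or> (b, a) \<in> P"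
    using P(1) unfolding total_preorder_on_def by auto
  have "\<forall>X\<in>A // (\<gamma> \<inter> \<gamma>\<inverse>). \<forall>Y\<in>A // (\<gamma> \<inter> \<gamma>\<inverse>). (X, Y) \<in> quotient_rel \<gamma> P \<or> (Y, X) \<in> quotient_rel \<gamma> P"
    using P_total unfolding quotient_rel_def quotient_def by blast
  then have "linear_order_on' (A // (\<gamma> \<inter> \<gamma>\<inverse>)) (quotient_rel \<gamma> P)"
    using partial_order_quotient_rel[OF \<gamma> P_on P(2,3)] unfolding linear_order_on'_def by blast
  moreover have "induced_order A \<gamma> \<subseteq> quotient_rel \<gamma> P"
    using P(2) unfolding induced_order_eq_quotient_rel[OF \<gamma>] quotient_rel_def by blast
  ultimately show ?thesis
    unfolding linear_extension_def by blast
qed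

lemma ex_total_preorder_extension:
  assumes \<gamma>: "quasiorder_on A \<gamma>"
  shows "\<exists>U. total_preorder_on A U \<and> \<gamma> \<subseteq> U \<and> U \<inter> U\<inverse> \<subseteq> \<gamma>"
proof -
  have "\<gamma> \<subseteq> A \<times> A" "trans \<gamma>"
    using \<gamma> unfolding quasiorder_on_def by auto
  then obtain L where L: "linear_order_on' (A // (\<gamma> \<inter> \<gamma>\<inverse>)) L" "quotient_rel \<gamma> \<gamma> \<subseteq> L"
    using szpilrajn_extension[OF partial_order_quotient_rel[OF \<gamma>]] by blast
  define U where "U = {(a, b). a \<in> A \<and> b \<in> A \<and> ((\<gamma> \<inter> \<gamma>\<inverse>) `` {a}, (\<gamma> \<inter> \<gamma>\<inverse>) `` {b}) \<in> L}"
  have "total_preorder_on A U"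
    using L(1) unfolding U_def linear_order_on'_def total_preorder_on_def trans_def
    by (blast intro: quotientI)
  moreover have "\<gamma> \<subseteq> U"
    using L(2) \<open>\<gamma> \<subseteq> A \<times> A\<close> unfolding U_def quotient_rel_def by blast
  moreover have "U \<inter> U\<inverse> \<subseteq> \<gamma>"
  proof (rule subsetI, clarify)
    fix a b assume "(a, b) \<in> U" "(b, a) \<in> U"
    then have "a \<in> A" "b \<in> A" "(\<gamma> \<inter> \<gamma>\<inverse>) `` {a} = (\<gamma> \<inter> \<gamma>\<inverse>) `` {b}"
      using L(1) unfolding U_def linear_order_on'_def antisym_def by auto
    then show "(a, b) \<in> \<gamma>"
      using Int_converse_class_eq_iff[OF \<gamma>] by blast
  qed
  ultimately show ?thesis
    by blast
qed

lemma linear_extensions_from_total_preorders: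
  assumes \<gamma>: "quasiorder_on A \<gamma>" and "I \<noteq> {}"
    and P: "\<And>i. i \<in> I \<Longrightarrow> total_preorder_on A (P i)" "\<And>i. i \<in> I \<Longrightarrow> \<gamma> \<subseteq> P i"
      "\<And>i. i \<in> I \<Longrightarrow> P i \<inter> (P i)\<inverse> \<subseteq> \<gamma>"
    and realizer: "(\<Inter>i\<in>I. P i) = \<gamma>"
  shows "(\<forall>i\<in>I. linear_extension (A // (\<gamma> \<inter> \<gamma>\<inverse>)) (induced_order A \<gamma>) (quotient_rel \<gamma> (P i))) \<and>
    (\<Inter>i\<in>I. quotient_rel \<gamma> (P i)) = induced_order A \<gamma>"
proof -
  have linext: "linear_extension (A // (\<gamma> \<inter> \<gamma>\<inverse>)) (induced_order A \<gamma>) (quotient_rel \<gamma> (P i))"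
    if "i \<in> I" for i
    using linear_extension_quotient_rel[OF \<gamma> P[OF that]] .
  have "(\<Inter>i\<in>I. quotient_rel \<gamma> (P i)) \<subseteq> induced_order A \<gamma>"
  proof (rule subrelI)
    fix X Y assume "(X, Y) \<in> (\<Inter>i\<in>I. quotient_rel \<gamma> (P i))"
    then have XY: "\<forall>i\<in>I. (X, Y) \<in> quotient_rel \<gamma> (P i)"
      by simp
    obtain i0 where "i0 \<in> I"
      using \<open>I \<noteq> {}\<close> by blast
    with XY have "(X, Y) \<in> quotient_rel \<gamma> (P i0)"
      by simp
    with linext[OF \<open>i0 \<in> I\<close>] have "X \<in> A // (\<gamma> \<inter> \<gamma>\<inverse>)" "Y \<in> A // (\<gamma> \<inter> \<gamma>\<inverse>)"
      unfolding linear_extension_def linear_order_on'_def by auto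
    then obtain a b where ab: "a \<in> A" "b \<in> A" "X = (\<gamma> \<inter> \<gamma>\<inverse>) `` {a}" "Y = (\<gamma> \<inter> \<gamma>\<inverse>) `` {b}"
      by (metis quotientE)
    have "(a, b) \<in> P i" if "i \<in> I" for i
    proof -
      have "P i \<subseteq> A \<times> A" "trans (P i)"
        using P(1)[OF that] unfolding total_preorder_on_def by auto
      moreover have "((\<gamma> \<inter> \<gamma>\<inverse>) `` {a}, (\<gamma> \<inter> \<gamma>\<inverse>) `` {b}) \<in> quotient_rel \<gamma> (P i)"
        using XY that ab(3,4) by simp
      ultimately show ?thesis
        using quotient_rel_iff[OF \<gamma> _ _ P(2)[OF that] ab(1,2)] by simp
    qed
    then have "(a, b) \<in> \<gamma>"
      unfolding realizer[symmetric] by simp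
    then show "(X, Y) \<in> induced_order A \<gamma>"
      using ab(3,4) unfolding induced_order_eq_quotient_rel[OF \<gamma>] quotient_rel_def by blast
  qed
  moreover have "induced_order A \<gamma> \<subseteq> (\<Inter>i\<in>I. quotient_rel \<gamma> (P i))"
    using linext unfolding linear_extension_def by (simp add: INT_greatest)
  ultimately show ?thesis
    using linext by (simp add: subset_antisym)
qed

section \<open>Breaking the ties of a half-space\<close>

definition lex_rel :: "'a rel \<Rightarrow> 'a rel \<Rightarrow> 'a rel" where
  "lex_rel Q M = {(a, b). (a, b) \<in> Q \<and> ((b, a) \<in> Q \<longrightarrow> (a, b) \<in> M)}"

lemma trans_lex_rel:
  assumes "trans Q"
    and M_trans: "\<And>a b c. (a, b) \<in> Q \<Longrightarrow> (b, a) \<in> Q \<Longrightarrow> (b, c) \<in> Q \<Longrightarrow> (c, b) \<in> Q \<Longrightarrow>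
      (a, b) \<in> M \<Longrightarrow> (b, c) \<in> M \<Longrightarrow> (a, c) \<in> M"
  shows "trans (lex_rel Q M)"
proof (rule transI)
  fix a b c assume ab: "(a, b) \<in> lex_rel Q M" and bc: "(b, c) \<in> lex_rel Q M"
  have Q_trans: "(x, z) \<in> Q" if "(x, y) \<in> Q" "(y, z) \<in> Q" for x y z
    using assms(1) that by (rule transD)
  from ab bc have "(a, b) \<in> Q" "(b, c) \<in> Q"
    unfolding lex_rel_def by auto
  moreover have "(a, c) \<in> M" if "(c, a) \<in> Q"
  proof -
    have "(b, a) \<in> Q" "(c, b) \<in> Q"
      using \<open>(a, b) \<in> Q\<close> \<open>(b, c) \<in> Q\<close> that by (blast intro: Q_trans)+
    with ab bc show ?thesis
      unfolding lex_rel_def by (auto intro: M_trans)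
  qed
  ultimately show "(a, c) \<in> lex_rel Q M"
    unfolding lex_rel_def by (blast intro: Q_trans)
qed

lemma half_space_quasiorder_on: "half_space A \<alpha> \<Longrightarrow> quasiorder_on A \<alpha>"
  unfolding half_space_def by blast

lemma half_space_complement_trans:
  assumes "half_space A \<alpha>" "a \<in> A" "b \<in> A" "c \<in> A" "(a, b) \<notin> \<alpha>" "(b, c) \<notin> \<alpha>" "a \<noteq> c"
  shows "(a, c) \<notin> \<alpha>"
proof -
  obtain \<beta> where \<beta>: "quasiorder_on A \<beta>" "\<alpha> \<union> \<beta> = A \<times> A" "\<alpha> \<inter> \<beta> = Id_on A"
    using assms(1) unfolding half_space_def by blast
  have "(a, b) \<in> \<beta>" "(b, c) \<in> \<beta>"
    using \<beta>(2) assms(2-6) by auto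
  then have "(a, c) \<in> \<beta>"
    using \<beta>(1) unfolding quasiorder_on_def by (meson transD)
  with \<beta>(3) assms(7) show ?thesis
    by (metis IntI Id_on_iff)
qed

definition merge_incomparables :: "'a set \<Rightarrow> 'a rel \<Rightarrow> 'a rel" where
  "merge_incomparables A \<alpha> = {(a, b). a \<in> A \<and> b \<in> A \<and> ((a, b) \<in> \<alpha> \<or> (b, a) \<notin> \<alpha>)}"

lemma total_preorder_merge_incomparables:
  assumes "half_space A \<alpha>"
  shows "total_preorder_on A (merge_incomparables A \<alpha>)"
proof -
  have "trans \<alpha>" "\<And>a. a \<in> A \<Longrightarrow> (a, a) \<in> \<alpha>"
    using half_space_quasiorder_on[OF assms] unfolding quasiorder_on_def by auto
  then have "trans (merge_incomparables A \<alpha>)"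
    using half_space_complement_trans[OF assms]
    unfolding merge_incomparables_def trans_def by blast
  then show ?thesis
    unfolding total_preorder_on_def merge_incomparables_def by blast
qed

text \<open>A tie class of \<^const>\<open>merge_incomparables\<close> is either an equivalence class or an
  antichain of the half-space.\<close>

lemma half_space_ties_homogeneous:
  assumes "half_space A \<alpha>" "a \<in> A" "b \<in> A" "c \<in> A" "a \<noteq> b" "b \<noteq> c" "a \<noteq> c"
    and "(a, b) \<in> \<alpha> \<longleftrightarrow> (b, a) \<in> \<alpha>" "(b, c) \<in> \<alpha> \<longleftrightarrow> (c, b) \<in> \<alpha>"
  shows "(a, b) \<in> \<alpha> \<longleftrightarrow> (b, c) \<in> \<alpha>" "(a, c) \<in> \<alpha> \<longleftrightarrow> (a, b) \<in> \<alpha>"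
proof -
  have "trans \<alpha>"
    using half_space_quasiorder_on[OF assms(1)] unfolding quasiorder_on_def by auto
  then show "(a, b) \<in> \<alpha> \<longleftrightarrow> (b, c) \<in> \<alpha>" "(a, c) \<in> \<alpha> \<longleftrightarrow> (a, b) \<in> \<alpha>"
    using assms half_space_complement_trans[OF assms(1)] unfolding trans_def by metis+
qed

definition tiebreak :: "'a set \<Rightarrow> 'a rel \<Rightarrow> 'a rel \<Rightarrow> 'a rel \<Rightarrow> 'a rel" where
  "tiebreak A \<alpha> X Y =
     lex_rel (merge_incomparables A \<alpha>) {(a, b). if (a, b) \<in> \<alpha> then (a, b) \<in> X else (a, b) \<in> Y}"

lemma tiebreak_iff:
  "(a, b) \<in> tiebreak A \<alpha> X Y \<longleftrightarrow> a \<in> A \<and> b \<in> A \<and>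
     (if (a, b) \<in> \<alpha> \<longleftrightarrow> (b, a) \<in> \<alpha> then (a, b) \<in> (if (a, b) \<in> \<alpha> then X else Y) else (a, b) \<in> \<alpha>)"
  unfolding tiebreak_def lex_rel_def merge_incomparables_def by auto

lemma total_preorder_tiebreak:
  assumes \<alpha>: "half_space A \<alpha>" and X: "total_preorder_on A X" and Y: "total_preorder_on A Y"
  shows "total_preorder_on A (tiebreak A \<alpha> X Y)"
proof -
  let ?Q = "merge_incomparables A \<alpha>"
  let ?S = "{(a, b). if (a, b) \<in> \<alpha> then (a, b) \<in> X else (a, b) \<in> Y}"
  have Q: "total_preorder_on A ?Q"
    using \<alpha> by (rule total_preorder_merge_incomparables)
  have "(a, c) \<in> ?S" if "(a, b) \<in> ?Q" "(b, a) \<in> ?Q" "(b, c) \<in> ?Q" "(c, b) \<in> ?Q"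
    "(a, b) \<in> ?S" "(b, c) \<in> ?S" for a b c
  proof -
    have A: "a \<in> A" "b \<in> A" "c \<in> A" and
      ties: "(a, b) \<in> \<alpha> \<longleftrightarrow> (b, a) \<in> \<alpha>" "(b, c) \<in> \<alpha> \<longleftrightarrow> (c, b) \<in> \<alpha>"
      using that(1-4) unfolding merge_incomparables_def by auto
    consider "a = b \<or> b = c" | "a = c" | "a \<noteq> b" "b \<noteq> c" "a \<noteq> c"
      by blast
    then show ?thesis
    proof cases
      case 1
      then show ?thesis using that(5,6) by auto
    next
      case 2
      then show ?thesis
        using A total_preorder_on_refl[OF X] total_preorder_on_refl[OF Y] by simp
    next
      case 3
      note homogeneous = half_space_ties_homogeneous[OF \<alpha> A 3 ties]
      show ?thesis
        using that(5,6) X Y homogeneous unfolding total_preorder_on_def trans_def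
        by (cases "(a, b) \<in> \<alpha>") auto
    qed
  qed
  then have "trans (tiebreak A \<alpha> X Y)"
    unfolding tiebreak_def using Q unfolding total_preorder_on_def by (blast intro: trans_lex_rel)
  moreover have "tiebreak A \<alpha> X Y \<subseteq> A \<times> A" "\<forall>a\<in>A. \<forall>b\<in>A. (a, b) \<in> tiebreak A \<alpha> X Y \<or> (b, a) \<in> tiebreak A \<alpha> X Y"
    using X Y unfolding total_preorder_on_def by (auto simp: tiebreak_iff)
  ultimately show ?thesis
    unfolding total_preorder_on_def by blast
qed

lemma converse_Int_self: "R\<inverse> \<inter> R = R \<inter> R\<inverse>"
  by auto

lemma subset_tiebreak:
  "\<gamma> \<subseteq> A \<times> A \<Longrightarrow> \<gamma> \<subseteq> \<alpha> \<Longrightarrow> \<gamma> \<subseteq> X \<Longrightarrow> \<gamma> \<subseteq> tiebreak A \<alpha> X Y"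
  by (auto simp: tiebreak_iff)

lemma tiebreak_Int_converse_subset:
  "X \<inter> X\<inverse> \<subseteq> S \<Longrightarrow> Y \<inter> Y\<inverse> \<subseteq> S \<Longrightarrow> tiebreak A \<alpha> X Y \<inter> (tiebreak A \<alpha> X Y)\<inverse> \<subseteq> S"
  by (auto simp: tiebreak_iff split: if_splits)

text \<open>Orders for two fixed indices \<open>i\<^sub>1 \<noteq> i\<^sub>2\<close>: the pivot \<open>i\<^sub>1\<close> orders its antichains by
  the reverse of \<open>\<alpha> i\<^sub>2\<close>, every other index by the reverse of \<open>\<alpha> i\<^sub>1\<close>, and the remaining
  choices between \<open>U\<close> and \<open>U\<inverse>\<close> make the orders disagree wherever all these half-spaces tie.\<close>

definition pivot_orders :: "'a set \<Rightarrow> ('i \<Rightarrow> 'a rel) \<Rightarrow> 'i \<Rightarrow> 'i \<Rightarrow> 'a rel \<Rightarrow> 'i \<Rightarrow> 'a rel" where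
  "pivot_orders A \<alpha> i\<^sub>1 i\<^sub>2 U i =
    (if i = i\<^sub>1 then tiebreak A (\<alpha> i\<^sub>1) U ((tiebreak A (\<alpha> i\<^sub>2) (U\<inverse>) (U\<inverse>))\<inverse>)
     else tiebreak A (\<alpha> i) (tiebreak A (\<alpha> i\<^sub>1) U (U\<inverse>)) ((tiebreak A (\<alpha> i\<^sub>1) U U)\<inverse>))"

lemma pivot_orders_exclude:
  assumes "a \<in> A" "b \<in> A" "(a, b) \<in> U \<longleftrightarrow> (b, a) \<notin> U" "(a, b) \<notin> \<alpha> j" "i\<^sub>1 \<noteq> i\<^sub>2"
  shows "\<exists>i \<in> {i\<^sub>1, i\<^sub>2, j}. (a, b) \<notin> pivot_orders A \<alpha> i\<^sub>1 i\<^sub>2 U i"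
  using assms unfolding pivot_orders_def by (cases "j = i\<^sub>1") (auto simp: tiebreak_iff)

lemma ex_total_preorder_realizer:
  assumes \<gamma>: "quasiorder_on A \<gamma>" and realizer: "half_space_realizer A \<gamma> I \<alpha>"
    and pivots: "i\<^sub>1 \<in> I" "i\<^sub>2 \<in> I" "i\<^sub>1 \<noteq> i\<^sub>2"
  shows "\<exists>P. (\<forall>i\<in>I. total_preorder_on A (P i) \<and> \<gamma> \<subseteq> P i \<and> P i \<inter> (P i)\<inverse> \<subseteq> \<gamma>) \<and>
    (\<Inter>i\<in>I. P i) = \<gamma>"
proof -
  have \<alpha>: "\<And>i. i \<in> I \<Longrightarrow> half_space A (\<alpha> i)" and \<gamma>_eq: "(\<Inter>i\<in>I. \<alpha> i) = \<gamma>"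
    using realizer unfolding half_space_realizer_def by auto
  have \<gamma>_on: "\<gamma> \<subseteq> A \<times> A"
    using \<gamma> unfolding quasiorder_on_def by simp
  have \<gamma>_\<alpha>: "\<gamma> \<subseteq> \<alpha> i" if "i \<in> I" for i
    using that unfolding \<gamma>_eq[symmetric] by blast
  obtain U where U: "total_preorder_on A U" "\<gamma> \<subseteq> U" "U \<inter> U\<inverse> \<subseteq> \<gamma>"
    using ex_total_preorder_extension[OF \<gamma>] by blast
  define P where "P = pivot_orders A \<alpha> i\<^sub>1 i\<^sub>2 U"
  have P_total: "total_preorder_on A (P i)" if "i \<in> I" for i
    unfolding P_def pivot_orders_def using that pivots \<alpha> U(1)
    by (auto intro!: total_preorder_tiebreak total_preorder_on_converse)
  have P_ext: "\<gamma> \<subseteq> P i" if "i \<in> I" for i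
    using that pivots
    by (cases "i = i\<^sub>1") (simp_all add: P_def pivot_orders_def subset_tiebreak \<gamma>_on \<gamma>_\<alpha> U(2))
  have P_sym: "P i \<inter> (P i)\<inverse> \<subseteq> \<gamma>" for i
    by (cases "i = i\<^sub>1")
      (simp_all add: P_def pivot_orders_def tiebreak_Int_converse_subset converse_Int_self U(3))
  have "(a, b) \<in> \<gamma>" if "(a, b) \<in> (\<Inter>i\<in>I. P i)" for a b
  proof (rule ccontr)
    assume "(a, b) \<notin> \<gamma>"
    then obtain j where "j \<in> I" "(a, b) \<notin> \<alpha> j"
      unfolding \<gamma>_eq[symmetric] by blast
    have "a \<in> A" "b \<in> A"
      using that pivots(1) P_total[OF pivots(1)] unfolding total_preorder_on_def by auto
    moreover from this have "(a, b) \<in> U \<longleftrightarrow> (b, a) \<notin> U"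
      using U \<open>(a, b) \<notin> \<gamma>\<close> unfolding total_preorder_on_def by blast
    ultimately have "\<exists>i \<in> {i\<^sub>1, i\<^sub>2, j}. (a, b) \<notin> P i"
      using \<open>(a, b) \<notin> \<alpha> j\<close> pivots(3) unfolding P_def by (rule pivot_orders_exclude)
    then obtain i where "i \<in> I" "(a, b) \<notin> P i"
      using pivots(1,2) \<open>j \<in> I\<close> by auto
    with that show False
      by (meson INT_D)
  qed
  then have "(\<Inter>i\<in>I. P i) = \<gamma>"
    using P_ext by (intro subset_antisym subrelI) auto
  moreover have "\<forall>i\<in>I. total_preorder_on A (P i) \<and> \<gamma> \<subseteq> P i \<and> P i \<inter> (P i)\<inverse> \<subseteq> \<gamma>"
    using P_total P_ext P_sym by simp
  ultimately show ?thesis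
    by (intro exI[of _ P] conjI)
qed

theorem theorem2p13:
  fixes A :: "'a set" and \<gamma> :: "'a rel" and I :: "'i set" and \<alpha> :: "'i \<Rightarrow> 'a rel"
  assumes "quasiorder_on A \<gamma>"
    and "half_space_realizer A \<gamma> I \<alpha>"
    and "\<exists>i\<in>I. \<exists>j\<in>I. i \<noteq> j"
  shows "\<exists>R :: 'i \<Rightarrow> 'a set rel.
           (\<forall>i\<in>I. linear_extension (A // (\<gamma> \<inter> \<gamma>\<inverse>)) (induced_order A \<gamma>) (R i)) \<and>
           (\<Inter>i\<in>I. R i) = induced_order A \<gamma>"
proof -
  obtain i\<^sub>1 i\<^sub>2 where pivots: "i\<^sub>1 \<in> I" "i\<^sub>2 \<in> I" "i\<^sub>1 \<noteq> i\<^sub>2"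
    using assms(3) by blast
  then obtain P where P: "\<And>i. i \<in> I \<Longrightarrow> total_preorder_on A (P i)" "\<And>i. i \<in> I \<Longrightarrow> \<gamma> \<subseteq> P i"
    "\<And>i. i \<in> I \<Longrightarrow> P i \<inter> (P i)\<inverse> \<subseteq> \<gamma>" "(\<Inter>i\<in>I. P i) = \<gamma>"
    using ex_total_preorder_realizer[OF assms(1,2)] by metis
  have "I \<noteq> {}"
    using pivots(1) by blast
  from linear_extensions_from_total_preorders[OF assms(1) this P] show ?thesis
    by (rule exI[of _ "\<lambda>i. quotient_rel \<gamma> (P i)"])
qed

end
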